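(* Let $B$ be the closed unit ball of $\mathfrak{M}^{2\times2}(\mathbb{R})\cong\mathbb{R}^4$, i.e. the set of matrices $\begin{pmatrix}a&c\\ b&d\end{pmatrix}$ with $a^2+b^2+c^2+d^2\le1$. Then $\sup_{A\in B}|\det A|=\tfrac12$, and there exists $p>1$ such that, with $P=\begin{pmatrix}0&0\\0&p\end{pmatrix}$, $$\sup_{A\in\mathrm{co}(\{P\}\cup B)}|\det A|=\sup_{A\in B}|\det A|=\tfrac12 .$$ Consequently the compact convex set $\mathrm{co}(\{P\}\cup B)$ has strictly larger volume than $B$ but the same value of $\sup|\det|$, so Euclidean balls do not maximise $|E|^{1/2}/\sup_{A\in E}|\det A|$ among compact convex sets $E\subset\mathfrak{M}^{2\times2}(\mathbb{R})$.
   Context: $\mathrm{co}(S)$ denotes the convex hull of $S$. Volume is Lebesgue measure on $\mathbb{R}^4$. *)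

theory Defs
  imports "HOL-Analysis.Analysis"
begin

text \<open>2x2 real matrices as real^2^2; entry A$i$j is row i, column j.
  The matrix (a c; b d) has a = A$1$1, c = A$1$2, b = A$2$1, d = A$2$2.\<close>

definition unit_ball_M2 :: "(real^2^2) set" where
  "unit_ball_M2 = {A. (A$1$1)^2 + (A$2$1)^2 + (A$1$2)^2 + (A$2$2)^2 \<le> 1}"

definition Pmat :: "real \<Rightarrow> real^2^2" where
  "Pmat p = (\<chi> i j. if i = 2 \<and> j = 2 then p else 0)"

end

theory Submission
  imports Defs
begin

text \<open>A point of the hull is \<open>(1 - s) P + s A\<close> with \<open>A\<close> in the ball, and
  \<open>det ((1 - s) P + s A) = s\<^sup>2 det A + s (1 - s) p a\<close>. Bounding \<open>det A\<close> by
  \<open>(1 - (a - d)\<^sup>2) / 2\<close> and \<open>a + d\<close> by \<open>\<surd>2\<close>, the defect \<open>1/2 - det\<close> becomes a square plus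
  a term that is nonnegative as long as \<open>0 \<le> p \<le> \<surd>2\<close>; this gives the determinant bound,
  with equality already at \<open>A = I/\<surd>2\<close>. On the other hand, for \<open>p > 1\<close> the hull contains
  a small ball around a point of the segment from the unit ball to \<open>P\<close> that lies outside
  the unit ball, so its volume is strictly larger.\<close>

lemma norm_M2_squared:
  "norm (A::real^2^2) ^ 2 = (A$1$1)^2 + (A$2$1)^2 + (A$1$2)^2 + (A$2$2)^2"
  by (simp add: norm_vec_def L2_set_def sum_2)

lemma unit_ball_M2_eq_cball: "unit_ball_M2 = cball 0 1"
proof (intro set_eqI)
  fix A :: "real^2^2"
  have "A \<in> unit_ball_M2 \<longleftrightarrow> norm A ^ 2 \<le> 1"
    by (simp add: unit_ball_M2_def norm_M2_squared)
  also have "\<dots> \<longleftrightarrow> A \<in> cball 0 1"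
    by (simp add: power_le_one_iff)
  finally show "A \<in> unit_ball_M2 \<longleftrightarrow> A \<in> cball 0 1" .
qed

lemma norm_Pmat: "norm (Pmat p) = \<bar>p\<bar>"
proof -
  have "norm (Pmat p) ^ 2 = p ^ 2"
    by (simp add: norm_M2_squared Pmat_def)
  then show ?thesis
    by (metis abs_norm_cancel real_sqrt_abs)
qed

lemma det_combination_Pmat:
  "det ((1 - s) *\<^sub>R Pmat p + s *\<^sub>R A) = s^2 * det A + s * (1 - s) * p * A$1$1"
  by (simp add: det_2 Pmat_def power2_eq_square algebra_simps)

lemma det_combination_Pmat_le_half:
  fixes s p a b c d :: real
  assumes "0 \<le> s" "s \<le> 1" "0 \<le> p" "p \<le> sqrt 2"
    and norm: "a^2 + b^2 + c^2 + d^2 \<le> 1"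
  shows "s^2 * (a*d - b*c) + s * (1 - s) * p * a \<le> 1/2"
proof -
  define e where "e = a - d"
  define q where "q = 1 - s"
  have "0 \<le> q" "0 \<le> s * q * p"
    using assms by (simp_all add: q_def)
  have det_le: "a*d - b*c \<le> (1 - e^2) / 2"
  proof -
    have "0 \<le> (b + c)^2" by simp
    with norm show ?thesis
      by (simp add: e_def power2_eq_square algebra_simps)
  qed
  have "(a + d)^2 + (a - d)^2 = 2 * (a^2 + d^2)"
    by (simp add: power2_eq_square algebra_simps)
  then have "(a + d)^2 \<le> 2"
    using norm zero_le_power2[of "a - d"] zero_le_power2[of b] zero_le_power2[of c] by argo
  then have "a + d \<le> sqrt 2"
    using real_le_rsqrt by blast
  then have a_le: "a \<le> (e + sqrt 2) / 2"
    by (simp add: e_def)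
  have "p * sqrt 2 \<le> 2"
    using mult_right_mono[OF \<open>p \<le> sqrt 2\<close>, of "sqrt 2"] by simp
  have "p^2 \<le> 2"
    using mult_mono[OF \<open>p \<le> sqrt 2\<close> \<open>p \<le> sqrt 2\<close>] \<open>0 \<le> p\<close> by (simp add: power2_eq_square)
  have "s * p * sqrt 2 \<le> 2 * s"
    using mult_left_mono[OF \<open>p * sqrt 2 \<le> 2\<close> \<open>0 \<le> s\<close>] by (simp add: ac_simps)
  moreover have "q * p^2 \<le> 2 * q"
    using mult_left_mono[OF \<open>p^2 \<le> 2\<close> \<open>0 \<le> q\<close>] by (simp add: ac_simps)
  ultimately have "0 \<le> 1 + s - s * p * sqrt 2 - q * p^2 / 4"
    using \<open>s \<le> 1\<close> q_def by linarith
  then have rest: "0 \<le> q * (1 + s - s * p * sqrt 2 - q * p^2 / 4)"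
    using \<open>0 \<le> q\<close> by simp
  have "1 - 2 * (s^2 * ((1 - e^2) / 2) + s * q * p * ((e + sqrt 2) / 2))
      = (s * e - q * p / 2)^2 + q * (1 + s - s * p * sqrt 2 - q * p^2 / 4)"
    unfolding q_def by (simp add: power2_eq_square algebra_simps divide_simps)
  then have "s^2 * ((1 - e^2) / 2) + s * q * p * ((e + sqrt 2) / 2) \<le> 1/2"
    using rest zero_le_power2[of "s * e - q * p / 2"] by argo
  moreover have "s^2 * (a*d - b*c) \<le> s^2 * ((1 - e^2) / 2)"
    using det_le by (rule mult_left_mono) simp
  moreover have "s * q * p * a \<le> s * q * p * ((e + sqrt 2) / 2)"
    using a_le \<open>0 \<le> s * q * p\<close> by (rule mult_left_mono)
  ultimately have "s^2 * (a*d - b*c) + s * q * p * a \<le> 1/2"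
    by argo
  then show ?thesis
    unfolding q_def .
qed

lemma abs_det_le_half_convex_hull_Pmat:
  assumes "0 \<le> p" "p \<le> sqrt 2" and X: "X \<in> convex hull (insert (Pmat p) unit_ball_M2)"
  shows "\<bar>det X\<bar> \<le> 1/2"
proof -
  have "convex hull unit_ball_M2 = unit_ball_M2" "unit_ball_M2 \<noteq> {}"
    by (simp_all add: unit_ball_M2_eq_cball convex_hull_eq)
  then obtain u s A where "0 \<le> u" "0 \<le> s" "u + s = 1" and A: "A \<in> unit_ball_M2"
    and "X = u *\<^sub>R Pmat p + s *\<^sub>R A"
    using X by (auto simp: convex_hull_insert)
  then have s: "0 \<le> s" "s \<le> 1" and X_eq: "X = (1 - s) *\<^sub>R Pmat p + s *\<^sub>R A"
    by (simp_all add: eq_diff_eq)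
  have norm: "(A$1$1)^2 + (A$2$1)^2 + (A$1$2)^2 + (A$2$2)^2 \<le> 1"
    using A by (simp add: unit_ball_M2_def)
  have det_X: "det X = s^2 * (A$1$1 * A$2$2 - A$2$1 * A$1$2) + s * (1 - s) * p * A$1$1"
    by (simp add: X_eq det_combination_Pmat det_2[of A] mult.commute)
  \<comment> \<open>The lower bound is the upper bound for \<open>A\<close> with its first row negated.\<close>
  have "det X \<le> 1/2"
    using det_combination_Pmat_le_half[OF s assms(1,2) norm] by (simp add: det_X)
  moreover have "- det X \<le> 1/2"
    using det_combination_Pmat_le_half[of s p "- A$1$1" "A$2$1" "- A$1$2" "A$2$2"] s assms(1,2) norm
    by (simp add: det_X algebra_simps)
  ultimately show ?thesis
    by linarith
qed

lemma mat_sqrt_half_in_unit_ball_M2: "mat (sqrt (1/2)) \<in> unit_ball_M2"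
  by (simp add: unit_ball_M2_def mat_def)

lemma det_mat_sqrt_half: "det (mat (sqrt (1/2)) :: real^2^2) = 1/2"
  by (simp add: det_2 mat_def)

lemma SUP_abs_det_eq_half:
  assumes "mat (sqrt (1/2)) \<in> S" "\<And>X. X \<in> S \<Longrightarrow> \<bar>det X\<bar> \<le> 1/2"
  shows "(SUP X\<in>S. \<bar>det (X::real^2^2)\<bar>) = 1/2"
  by (rule cSup_eq_maximum) (use assms det_mat_sqrt_half in force)+

lemma ball_subset_convex_hull_insert_cball:
  fixes x :: "'a::real_normed_vector"
  assumes "0 \<le> t" "t < 1"
  shows "ball (t *\<^sub>R x) (1 - t) \<subseteq> convex hull (insert x (cball 0 1))"
proof
  fix y assume "y \<in> ball (t *\<^sub>R x) (1 - t)"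
  then have "norm (y - t *\<^sub>R x) < 1 - t"
    by (simp add: dist_norm norm_minus_commute)
  define w where "w = (1 / (1 - t)) *\<^sub>R (y - t *\<^sub>R x)"
  have "norm w = norm (y - t *\<^sub>R x) / (1 - t)"
    using assms unfolding w_def norm_scaleR by simp
  then have "norm w \<le> 1"
    using \<open>norm (y - t *\<^sub>R x) < 1 - t\<close> assms by (simp add: divide_le_eq_1)
  moreover have "y = t *\<^sub>R x + (1 - t) *\<^sub>R w"
    using assms by (simp add: w_def)
  ultimately show "y \<in> convex hull (insert x (cball 0 1))"
    using assms convexD[OF convex_convex_hull, of x "insert x (cball 0 1)" w t "1 - t"]
    by (simp add: hull_inc)
qed

text \<open>For \<open>t = 2 / (1 + \<parallel>x\<parallel>)\<close> the ball of the previous lemma touches the unit sphere from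
  outside, so it adds positive volume to the unit ball.\<close>

lemma emeasure_cball_less_convex_hull_insert:
  fixes x :: "'a::euclidean_space"
  assumes "1 < norm x"
  shows "emeasure lebesgue (cball (0::'a) 1) < emeasure lebesgue (convex hull (insert x (cball 0 1)))"
proof -
  define t where "t = 2 / (1 + norm x)"
  have t: "0 \<le> t" "t < 1" "t * (1 + norm x) = 2"
    using assms by (simp_all add: t_def field_simps)
  let ?B = "ball (t *\<^sub>R x) (1 - t)"
  let ?H = "convex hull (insert x (cball (0::'a) 1))"
  have disjoint: "cball 0 1 \<inter> ?B = {}"
  proof (intro equalityI subsetI)
    fix y assume y: "y \<in> cball 0 1 \<inter> ?B"
    have "norm (t *\<^sub>R x) \<le> norm y + norm (t *\<^sub>R x - y)"
      by (rule norm_triangle_sub)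
    moreover have "norm (t *\<^sub>R x - y) < 1 - t" "norm y \<le> 1"
      using y by (auto simp: dist_norm)
    ultimately show "y \<in> {}"
      using t by (simp add: algebra_simps)
  qed simp
  have "compact ?H"
    by (simp add: compact_convex_hull)
  then have "?H \<in> sets lebesgue"
    by (simp add: fmeasurableD lmeasurable_compact)
  moreover have "cball 0 1 \<union> ?B \<subseteq> ?H"
    using ball_subset_convex_hull_insert_cball[OF t(1,2)] hull_subset[of "insert x (cball 0 1)"]
    by blast
  ultimately have "emeasure lebesgue (cball 0 1 \<union> ?B) \<le> emeasure lebesgue ?H"
    by (rule emeasure_mono[rotated])
  moreover have "emeasure lebesgue (cball 0 1 \<union> ?B) = emeasure lebesgue (cball (0::'a) 1) + emeasure lebesgue ?B"
    using disjoint by (intro plus_emeasure[symmetric]) (auto intro: fmeasurableD)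
  moreover have "emeasure lebesgue (cball (0::'a) 1) < \<infinity>"
    using emeasure_lborel_cball_finite[of "0::'a" 1] by simp
  moreover have "0 < emeasure lebesgue ?B"
    using t by (simp add: emeasure_ball)
  ultimately show ?thesis
    by (metis add.right_neutral ennreal_add_left_cancel_less order_less_le_trans)
qed

theorem mainTheorem5:
  shows "(SUP A\<in>unit_ball_M2. \<bar>det A\<bar>) = 1/2 \<and>
    (\<exists>p::real. p > 1 \<and>
       (SUP A\<in>convex hull (insert (Pmat p) unit_ball_M2). \<bar>det A\<bar>) = (SUP A\<in>unit_ball_M2. \<bar>det A\<bar>) \<and>
       (SUP A\<in>convex hull (insert (Pmat p) unit_ball_M2). \<bar>det A\<bar>) = 1/2 \<and>
       compact (convex hull (insert (Pmat p) unit_ball_M2)) \<and>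
       convex (convex hull (insert (Pmat p) unit_ball_M2)) \<and>
       emeasure lebesgue (convex hull (insert (Pmat p) unit_ball_M2)) > emeasure lebesgue unit_ball_M2)"
proof -
  define H where "H = convex hull (insert (Pmat (sqrt 2)) unit_ball_M2)"
  have "unit_ball_M2 \<subseteq> H"
    unfolding H_def by (meson hull_subset subset_insertI subset_trans)
  have det_le: "\<bar>det X\<bar> \<le> 1/2" if "X \<in> H" for X
    using abs_det_le_half_convex_hull_Pmat[of "sqrt 2"] that by (simp add: H_def)
  have "(SUP A\<in>unit_ball_M2. \<bar>det A\<bar>) = 1/2"
    using det_le \<open>unit_ball_M2 \<subseteq> H\<close>
    by (intro SUP_abs_det_eq_half[OF mat_sqrt_half_in_unit_ball_M2]) blast
  moreover have "(SUP X\<in>H. \<bar>det X\<bar>) = 1/2"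
    using mat_sqrt_half_in_unit_ball_M2 \<open>unit_ball_M2 \<subseteq> H\<close>
    by (intro SUP_abs_det_eq_half det_le) blast+
  moreover have "compact H"
    by (simp add: H_def unit_ball_M2_eq_cball compact_convex_hull)
  moreover have "emeasure lebesgue unit_ball_M2 < emeasure lebesgue H"
    using emeasure_cball_less_convex_hull_insert[of "Pmat (sqrt 2)"]
    by (simp add: H_def unit_ball_M2_eq_cball norm_Pmat)
  ultimately show ?thesis
    unfolding H_def by (intro conjI exI[of _ "sqrt 2"]) simp_all
qed

end
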